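(* Let $n\ge 2$, $t\ge 2$. Every $\mathbb{F}_q$-linear set $L$ of $\Lambda=PG(V,\mathbb{F}_{q^t})=PG(2n-1,q^t)$ of pseudoregulus type is of the form $L_{\rho,f}$; that is, there exist a decomposition $V=U_1\oplus U_2$ with $\dim U_1=\dim U_2=n$, an invertible semilinear map $f:U_1\to U_2$ whose companion automorphism $\sigma$ satisfies $\mathrm{Fix}(\sigma)=\mathbb{F}_q$, and $\rho\in\mathbb{F}_{q^t}^*$, such that $L=\{\langle\mathbf u+\rho f(\mathbf u)\rangle_{q^t}:\mathbf u\in U_1\setminus\{\mathbf 0\}\}$.
   Context: For an $\mathbb{F}_q$-subspace $U$ of $V$, $L_U=\{\langle\mathbf u\rangle_{q^t}:\mathbf u\in U\setminus\{\mathbf 0\}\}$ is the $\mathbb{F}_q$-linear set defined by $U$, of rank $\dim_{\mathbb F_q}U$; the weight of a subspace $PG(W,\mathbb{F}_{q^t})$ in $L_U$ is $\dim_{\mathbb F_q}(W\cap U)$; $L_U$ is scattered if every point has weight 1. A semilinear map $f$ with companion automorphism $\sigma$ is additive with $f(\lambda\mathbf u)=\lambda^\sigma f(\mathbf u)$. Pseudoregulus type: for $t,n\ge 2$, a scattered $\mathbb{F}_q$-linear set $L=L_U$ of $PG(2n-1,q^t)$ of rank $tn$ is of pseudoregulus type if (i) there exist $(q^{nt}-1)/(q^t-1)$ pairwise disjoint lines $s_i$ each of weight $t$ in $L$, and (ii) there exist exactly two $(n-1)$-dimensional subspaces $T_1,T_2$ disjoint from $L$ with $T_j\cap s_i\ne\emptyset$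 for all $i,j$. *)

theory Defs
  imports Main
begin

text \<open>Vectors of V = F^N (F = 'a, the field F_{q^t}) are functions nat => 'a vanishing at
  indices >= N.  Subspaces (over a subfield K, or over F itself with K = UNIV) are sets of
  such vectors.\<close>

definition vzero :: "nat \<Rightarrow> 'a::field" where
  "vzero = (\<lambda>_. 0)"

definition vadd :: "(nat \<Rightarrow> 'a::field) \<Rightarrow> (nat \<Rightarrow> 'a) \<Rightarrow> (nat \<Rightarrow> 'a)" where
  "vadd u v = (\<lambda>i. u i + v i)"

definition vsm :: "'a::field \<Rightarrow> (nat \<Rightarrow> 'a) \<Rightarrow> (nat \<Rightarrow> 'a)" where
  "vsm c v = (\<lambda>i. c * v i)"

definition ambient :: "nat \<Rightarrow> (nat \<Rightarrow> 'a::field) set" where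
  "ambient N = {v. \<forall>i\<ge>N. v i = 0}"

definition is_subfield :: "'a::field set \<Rightarrow> bool" where
  "is_subfield K \<longleftrightarrow> 0 \<in> K \<and> 1 \<in> K \<and>
     (\<forall>x\<in>K. \<forall>y\<in>K. x + y \<in> K \<and> x * y \<in> K) \<and>
     (\<forall>x\<in>K. - x \<in> K) \<and> (\<forall>x\<in>K. x \<noteq> 0 \<longrightarrow> inverse x \<in> K)"

definition field_automorphism :: "('a::field \<Rightarrow> 'a) \<Rightarrow> bool" where
  "field_automorphism \<sigma> \<longleftrightarrow> bij \<sigma> \<and>
     (\<forall>x y. \<sigma> (x + y) = \<sigma> x + \<sigma> y) \<and> (\<forall>x y. \<sigma> (x * y) = \<sigma> x * \<sigma> y)"

definition subspace_over :: "'a::field set \<Rightarrow> (nat \<Rightarrow> 'a) set \<Rightarrow> bool" where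
  "subspace_over K U \<longleftrightarrow> vzero \<in> U \<and> (\<forall>u\<in>U. \<forall>v\<in>U. vadd u v \<in> U) \<and>
     (\<forall>c\<in>K. \<forall>u\<in>U. vsm c u \<in> U)"

definition lin_comb :: "((nat \<Rightarrow> 'a::field) \<Rightarrow> 'a) \<Rightarrow> (nat \<Rightarrow> 'a) set \<Rightarrow> (nat \<Rightarrow> 'a)" where
  "lin_comb c B = (\<lambda>i. \<Sum>b\<in>B. c b * b i)"

definition span_over :: "'a::field set \<Rightarrow> (nat \<Rightarrow> 'a) set \<Rightarrow> (nat \<Rightarrow> 'a) set" where
  "span_over K B = {lin_comb c B | c. \<forall>b\<in>B. c b \<in> K}"

definition indep_over :: "'a::field set \<Rightarrow> (nat \<Rightarrow> 'a) set \<Rightarrow> bool" where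
  "indep_over K B \<longleftrightarrow> (\<forall>c. (\<forall>b\<in>B. c b \<in> K) \<and> lin_comb c B = vzero \<longrightarrow> (\<forall>b\<in>B. c b = 0))"

definition has_dim :: "'a::field set \<Rightarrow> (nat \<Rightarrow> 'a) set \<Rightarrow> nat \<Rightarrow> bool" where
  "has_dim K U k \<longleftrightarrow> (\<exists>B. finite B \<and> card B = k \<and> B \<subseteq> U \<and> indep_over K B \<and> span_over K B = U)"

text \<open>The projective point <u>_{q^t}, represented by the 1-dimensional F-subspace spanned by u.\<close>
definition point :: "(nat \<Rightarrow> 'a::field) \<Rightarrow> (nat \<Rightarrow> 'a) set" where
  "point u = {vsm c u | c. True}"

definition linear_set :: "(nat \<Rightarrow> 'a::field) set \<Rightarrow> (nat \<Rightarrow> 'a) set set" where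
  "linear_set U = {point u | u. u \<in> U \<and> u \<noteq> vzero}"

text \<open>Weight of the projective subspace PG(W) in L_U is dim_K (W \<inter> U); L_U scattered:
  every point has weight 1.\<close>
definition scattered :: "'a::field set \<Rightarrow> (nat \<Rightarrow> 'a) set \<Rightarrow> bool" where
  "scattered K U \<longleftrightarrow> (\<forall>u\<in>U. u \<noteq> vzero \<longrightarrow> has_dim K (point u \<inter> U) 1)"

text \<open>Lines are 2-dimensional F-subspaces, (n-1)-dimensional projective subspaces are
  n-dimensional F-subspaces; projective disjointness means vector intersection {0}.\<close>
definition pseudoregulus_type :: "'a::field set \<Rightarrow> nat \<Rightarrow> nat \<Rightarrow> (nat \<Rightarrow> 'a) set \<Rightarrow> bool" where
  "pseudoregulus_type K n t U \<longleftrightarrow>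
     t \<ge> 2 \<and> n \<ge> 2 \<and>
     U \<subseteq> ambient (2*n) \<and> subspace_over K U \<and> has_dim K U (t*n) \<and> scattered K U \<and>
     (\<exists>S. card S = (card K ^ (n*t) - 1) div (card K ^ t - 1) \<and>
        (\<forall>s\<in>S. s \<subseteq> ambient (2*n) \<and> subspace_over UNIV s \<and> has_dim UNIV s 2
                 \<and> has_dim K (s \<inter> U) t) \<and>
        (\<forall>s\<in>S. \<forall>s'\<in>S. s \<noteq> s' \<longrightarrow> s \<inter> s' = {vzero}) \<and>
        card {T. T \<subseteq> ambient (2*n) \<and> subspace_over UNIV T \<and> has_dim UNIV T n \<and>
                 (\<forall>P\<in>linear_set U. \<not> P \<subseteq> T) \<and>
                 (\<forall>s\<in>S. T \<inter> s \<noteq> {vzero})} = 2)"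

definition semilinear_on :: "(nat \<Rightarrow> 'a::field) set \<Rightarrow> ((nat \<Rightarrow> 'a) \<Rightarrow> (nat \<Rightarrow> 'a)) \<Rightarrow> ('a \<Rightarrow> 'a) \<Rightarrow> bool" where
  "semilinear_on U1 f \<sigma> \<longleftrightarrow> field_automorphism \<sigma> \<and>
     (\<forall>u\<in>U1. \<forall>v\<in>U1. f (vadd u v) = vadd (f u) (f v)) \<and>
     (\<forall>c. \<forall>u\<in>U1. f (vsm c u) = vsm (\<sigma> c) (f u))"

end

theory Submission
  imports Defs "HOL-Library.Function_Algebras" "HOL-Library.FuncSet" "HOL-Library.Cardinality"
begin

text \<open>Let \<open>T\<^sub>1, T\<^sub>2\<close> be the two transversal spaces. They are disjoint: otherwise
  \<open>M = T\<^sub>1 + T\<^sub>2\<close> is a proper subspace, so at least half of the vectors of the scattered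
  subspace \<open>U\<close> lie outside \<open>M\<close>; but a line of the pseudoregulus leaving \<open>M\<close> must meet
  \<open>T\<^sub>1\<close> and \<open>T\<^sub>2\<close> in the same point of \<open>T\<^sub>1 \<inter> T\<^sub>2\<close>, and there are too few such points.
  Hence \<open>V = T\<^sub>1 \<oplus> T\<^sub>2\<close>, and as \<open>U\<close> meets both summands trivially and \<open>|U| = |T\<^sub>1|\<close>,
  \<open>U\<close> is the graph \<open>{u + f u}\<close> of an \<open>\<F>\<^sub>q\<close>-linear bijection \<open>f : T\<^sub>1 \<rightarrow> T\<^sub>2\<close>.
  Each line \<open>s\<close> is spanned by its points on \<open>T\<^sub>1\<close> and \<open>T\<^sub>2\<close>, and the \<open>q\<^sup>t\<close> vectors of
  \<open>U \<inter> s\<close> project onto the whole point \<open>s \<inter> T\<^sub>1\<close>; so \<open>f\<close> maps points to points,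
  \<open>f (\<lambda> x) = \<sigma>\<^sub>x(\<lambda>) f x\<close>. Comparing \<open>x\<close>, \<open>y\<close> and \<open>x + y\<close> shows that \<open>\<sigma>\<^sub>x\<close> does not
  depend on \<open>x\<close>; it is an automorphism, fixing exactly \<open>\<F>\<^sub>q\<close> because \<open>U\<close> is scattered.
  One may take \<open>\<rho> = 1\<close>.\<close>

lemma vadd_eq_plus [simp]: "vadd u v = u + v"
  by (simp add: vadd_def plus_fun_def)

lemma vzero_eq_zero [simp]: "vzero = (0 :: nat \<Rightarrow> 'a::field)"
  by (simp add: vzero_def zero_fun_def)

lemma vsm_add_left: "vsm (a + b) v = vsm a v + vsm b v"
  by (simp add: vsm_def plus_fun_def algebra_simps)

lemma vsm_add_right: "vsm a (u + v) = vsm a u + vsm a v"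
  by (simp add: vsm_def plus_fun_def algebra_simps)

lemma vsm_diff_left: "vsm (a - b) v = vsm a v - vsm b v"
  by (simp add: vsm_def fun_eq_iff algebra_simps)

lemma vsm_diff_right: "vsm a (u - v) = vsm a u - vsm a v"
  by (simp add: vsm_def fun_eq_iff algebra_simps)

lemma vsm_vsm: "vsm a (vsm b v) = vsm (a * b) v"
  by (simp add: vsm_def algebra_simps)

lemma vsm_one [simp]: "vsm 1 v = v"
  by (simp add: vsm_def)

lemma vsm_zero_left [simp]: "vsm 0 v = 0"
  by (simp add: vsm_def zero_fun_def)

lemma vsm_zero_right [simp]: "vsm a 0 = 0"
  by (simp add: vsm_def zero_fun_def)

lemma vsm_minus_one: "vsm (-1) v = - v"
  by (simp add: vsm_def fun_eq_iff)

lemma vsm_eq_0_iff: "vsm a v = 0 \<longleftrightarrow> a = 0 \<or> v = (0 :: nat \<Rightarrow> 'a::field)"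
  by (auto simp: vsm_def fun_eq_iff)

lemma vsm_right_cancel: "v \<noteq> 0 \<Longrightarrow> vsm a v = vsm b v \<longleftrightarrow> a = (b :: 'a::field)"
  using vsm_eq_0_iff[of "a - b" v] by (auto simp: vsm_diff_left)

lemma vsm_inverse_cancel [simp]: "c \<noteq> 0 \<Longrightarrow> vsm (inverse c) (vsm c v) = v"
  by (simp add: vsm_vsm)

lemma is_subfield_UNIV: "is_subfield UNIV"
  by (simp add: is_subfield_def)

lemma subfield_diff: "is_subfield K \<Longrightarrow> x \<in> K \<Longrightarrow> y \<in> K \<Longrightarrow> x - y \<in> K"
  unfolding is_subfield_def by (metis diff_conv_add_uminus)

lemma subfield_divide: "is_subfield K \<Longrightarrow> x \<in> K \<Longrightarrow> y \<in> K \<Longrightarrow> x / y \<in> K"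
  unfolding is_subfield_def by (metis divide_inverse inverse_zero)

lemma subspace_zero: "subspace_over K W \<Longrightarrow> 0 \<in> W"
  by (simp add: subspace_over_def)

lemma subspace_add: "subspace_over K W \<Longrightarrow> u \<in> W \<Longrightarrow> v \<in> W \<Longrightarrow> u + v \<in> W"
  by (simp add: subspace_over_def)

lemma subspace_vsm: "subspace_over K W \<Longrightarrow> c \<in> K \<Longrightarrow> u \<in> W \<Longrightarrow> vsm c u \<in> W"
  by (simp add: subspace_over_def)

lemma subspace_UNIV_vsm: "subspace_over UNIV W \<Longrightarrow> u \<in> W \<Longrightarrow> vsm c u \<in> W"
  by (simp add: subspace_over_def)

lemma subspace_uminus: "subspace_over K W \<Longrightarrow> is_subfield K \<Longrightarrow> u \<in> W \<Longrightarrow> - u \<in> W"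
  by (metis subspace_vsm vsm_minus_one is_subfield_def)

lemma subspace_diff:
  "subspace_over K W \<Longrightarrow> is_subfield K \<Longrightarrow> u \<in> W \<Longrightarrow> v \<in> W \<Longrightarrow> u - v \<in> W"
  by (metis subspace_add subspace_uminus diff_conv_add_uminus)

lemma subspace_inter: "subspace_over K W1 \<Longrightarrow> subspace_over K W2 \<Longrightarrow> subspace_over K (W1 \<inter> W2)"
  by (simp add: subspace_over_def)

lemma subspace_UNIV_diff: "subspace_over UNIV W \<Longrightarrow> u \<in> W \<Longrightarrow> v \<in> W \<Longrightarrow> u - v \<in> W"
  using subspace_diff is_subfield_UNIV by blast

lemma mem_point_iff: "w \<in> point u \<longleftrightarrow> (\<exists>c. w = vsm c u)"
  by (auto simp: point_def)

lemma point_self: "u \<in> point u"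
  by (metis mem_point_iff vsm_one)

lemma zero_in_point: "0 \<in> point u"
  by (metis mem_point_iff vsm_zero_left)

lemma point_subset: "subspace_over UNIV W \<Longrightarrow> u \<in> W \<Longrightarrow> point u \<subseteq> W"
  by (auto simp: mem_point_iff subspace_UNIV_vsm)

lemma point_subset_point: "v \<in> point u \<Longrightarrow> point v \<subseteq> point u"
  by (auto simp: mem_point_iff vsm_vsm)

lemma point_eq_point: "v \<in> point u \<Longrightarrow> v \<noteq> 0 \<Longrightarrow> point v = point u"
proof
  assume v: "v \<in> point u" "v \<noteq> 0"
  show "point v \<subseteq> point u" using v(1) by (rule point_subset_point)
  obtain c where c: "v = vsm c u" using v(1) by (auto simp: mem_point_iff)
  then have "c \<noteq> 0" using v(2) by auto
  then have "u \<in> point v" using c by (auto simp: mem_point_iff intro: exI[of _ "inverse c"])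
  then show "point u \<subseteq> point v" by (rule point_subset_point)
qed

lemma point_eq_image: "point u = (\<lambda>c. vsm c u) ` UNIV"
  by (auto simp: point_def)

lemma finite_point:
  fixes u :: "nat \<Rightarrow> 'a::{field,finite}"
  shows "finite (point u)"
  by (simp add: point_eq_image)

lemma card_point_le:
  fixes u :: "nat \<Rightarrow> 'a::{field,finite}"
  shows "card (point u) \<le> CARD('a)"
  by (simp add: point_eq_image card_image_le)

lemma card_point:
  fixes u :: "nat \<Rightarrow> 'a::{field,finite}"
  shows "u \<noteq> 0 \<Longrightarrow> card (point u) = CARD('a)"
  by (simp add: point_eq_image card_image inj_on_def vsm_right_cancel)

lemma card_has_dim:
  fixes W :: "(nat \<Rightarrow> 'a::{field,finite}) set"
  assumes "is_subfield K" "has_dim K W k"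
  shows "card W = card K ^ k"
proof -
  obtain B where B: "finite B" "card B = k" "indep_over K B" "span_over K B = W"
    using assms(2) unfolding has_dim_def by blast
  define P :: "((nat \<Rightarrow> 'a) \<Rightarrow> 'a) set" where "P = PiE B (\<lambda>_. K)"
  have "W = (\<lambda>c. lin_comb c B) ` P"
  proof
    show "(\<lambda>c. lin_comb c B) ` P \<subseteq> W"
      using B(4) unfolding P_def span_over_def by (auto simp: PiE_iff)
    show "W \<subseteq> (\<lambda>c. lin_comb c B) ` P"
    proof
      fix w assume "w \<in> W"
      then obtain c where c: "w = lin_comb c B" "\<forall>b\<in>B. c b \<in> K"
        using B(4) by (auto simp: span_over_def)
      then have "restrict c B \<in> P" "lin_comb (restrict c B) B = w"
        by (auto simp: P_def lin_comb_def)
      then show "w \<in> (\<lambda>c. lin_comb c B) ` P" by force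
    qed
  qed
  moreover have "inj_on (\<lambda>c. lin_comb c B) P"
  proof (rule inj_onI)
    fix c d assume c: "c \<in> P" and d: "d \<in> P" and eq: "lin_comb c B = lin_comb d B"
    have "lin_comb (\<lambda>b. c b - d b) B = vzero"
      using eq by (simp add: lin_comb_def fun_eq_iff left_diff_distrib sum_subtractf)
    moreover have "\<forall>b\<in>B. c b - d b \<in> K"
      using c d assms(1) by (auto simp: P_def intro: subfield_diff)
    ultimately have "\<forall>b\<in>B. c b - d b = 0"
      using B(3) unfolding indep_over_def by (auto dest: spec[where x="\<lambda>b. c b - d b"])
    then show "c = d" using c d by (auto simp: P_def intro: PiE_ext)
  qed
  ultimately have "card W = card P" by (simp add: card_image)
  also have "\<dots> = card K ^ k" using B by (simp add: P_def card_PiE)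
  finally show ?thesis .
qed

lemma
  fixes N :: nat
  shows card_ambient: "card (ambient N :: (nat \<Rightarrow> 'a::{field,finite}) set) = CARD('a) ^ N"
    and finite_ambient: "finite (ambient N :: (nat \<Rightarrow> 'a::{field,finite}) set)"
proof -
  define g where "g = (\<lambda>(v :: nat \<Rightarrow> 'a) i. if i < N then v i else 0)"
  define P :: "(nat \<Rightarrow> 'a) set" where "P = PiE {..<N} (\<lambda>_. UNIV)"
  have img: "ambient N = g ` P"
  proof
    show "g ` P \<subseteq> ambient N" by (auto simp: g_def ambient_def)
    show "ambient N \<subseteq> g ` P"
    proof
      fix v :: "nat \<Rightarrow> 'a" assume "v \<in> ambient N"
      then have "v = g (restrict v {..<N})" by (auto simp: g_def ambient_def fun_eq_iff)
      then show "v \<in> g ` P" by (auto simp: P_def)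
    qed
  qed
  have "inj_on g P"
    by (rule inj_onI) (auto simp: P_def g_def fun_eq_iff PiE_def extensional_def, metis)
  then show "card (ambient N :: (nat \<Rightarrow> 'a) set) = CARD('a) ^ N"
    using img by (simp add: card_image P_def card_PiE)
  show "finite (ambient N :: (nat \<Rightarrow> 'a) set)" using img by (simp add: P_def finite_PiE)
qed

lemma diff_one_dvd_power_diff_one: "(x::nat) \<ge> 1 \<Longrightarrow> (x - 1) dvd (x ^ n - 1)"
proof (induction n)
  case (Suc n)
  have "x ^ Suc n - 1 = x * (x ^ n - 1) + (x - 1)"
    using Suc.prems by (simp add: algebra_simps diff_mult_distrib2)
  then show ?case using Suc by (metis dvd_add dvd_mult dvd_refl)
qed simp

lemma vsm_pair_eq_imp_eq:
  assumes "x \<noteq> (0 :: nat \<Rightarrow> 'a::field)" "y \<notin> point x"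
    and "vsm a x + vsm b y = vsm a' x + vsm b' y"
  shows "a = a' \<and> b = b'"
proof -
  have e: "vsm (b - b') y = vsm (a' - a) x"
    using assms(3) by (simp add: vsm_diff_left algebra_simps)
  show ?thesis
  proof (cases "b = b'")
    case True
    then show ?thesis using e assms(1) by (simp add: vsm_eq_0_iff)
  next
    case False
    then have "y = vsm (inverse (b - b')) (vsm (a' - a) x)"
      by (simp add: e[symmetric])
    then have "y = vsm (inverse (b - b') * (a' - a)) x" by (simp add: vsm_vsm)
    then show ?thesis using assms(2) by (auto simp: mem_point_iff)
  qed
qed

lemma line_eq_span_pair:
  fixes s :: "(nat \<Rightarrow> 'a::{field,finite}) set"
  assumes "subspace_over UNIV s" "finite s" "card s = CARD('a) ^ 2"
    and "x \<in> s" "x \<noteq> 0" "y \<in> s" "y \<notin> point x"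
  shows "s = {vsm a x + vsm b y | a b. True}"
proof -
  define h where "h = (\<lambda>(a, b). vsm a x + vsm b y)"
  have img: "{vsm a x + vsm b y | a b. True} = h ` UNIV" by (auto simp: h_def)
  have "inj h" unfolding h_def
    by (rule injI) (use vsm_pair_eq_imp_eq[OF assms(5,7)] in auto)
  then have "card (h ` UNIV) = CARD('a) ^ 2"
    by (simp add: card_image power2_eq_square UNIV_Times_UNIV[symmetric]
        card_cartesian_product del: UNIV_Times_UNIV)
  moreover have "h ` UNIV \<subseteq> s"
    using assms by (auto simp: h_def intro!: subspace_add subspace_UNIV_vsm)
  ultimately show ?thesis using card_subset_eq[OF assms(2)] assms(3) img by metis
qed

lemma line_inter_subspace:
  fixes s :: "(nat \<Rightarrow> 'a::{field,finite}) set"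
  assumes s: "subspace_over UNIV s" "finite s" "card s = CARD('a) ^ 2"
    and W: "subspace_over UNIV W"
    and x: "x \<in> s \<inter> W" "x \<noteq> 0" and w: "w \<in> s" "w \<notin> W"
  shows "s \<inter> W = point x"
proof
  have "w \<notin> point x" using point_subset[OF W] x(1) w(2) by blast
  then have s_eq: "s = {vsm a x + vsm b w | a b. True}"
    using line_eq_span_pair[OF s _ x(2) w(1)] x(1) by blast
  show "s \<inter> W \<subseteq> point x"
  proof
    fix z assume z: "z \<in> s \<inter> W"
    then obtain a b where ab: "z = vsm a x + vsm b w" using s_eq by blast
    have "vsm b w = z - vsm a x" using ab by simp
    also have "\<dots> \<in> W" using z x(1) W by (auto intro!: subspace_UNIV_diff subspace_UNIV_vsm)
    finally have "b = 0"
      using w(2) subspace_UNIV_vsm[OF W, of "vsm b w" "inverse b"] by (cases "b = 0") auto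
    then show "z \<in> point x" using ab by (auto simp: mem_point_iff)
  qed
  show "point x \<subseteq> s \<inter> W" using x(1) point_subset[OF s(1)] point_subset[OF W] by blast
qed

definition subspace_sum :: "(nat \<Rightarrow> 'a::field) set \<Rightarrow> (nat \<Rightarrow> 'a) set \<Rightarrow> (nat \<Rightarrow> 'a) set" where
  "subspace_sum W1 W2 = {a + b | a b. a \<in> W1 \<and> b \<in> W2}"

lemma subspace_sum_eq_image: "subspace_sum W1 W2 = (\<lambda>(a, b). a + b) ` (W1 \<times> W2)"
  by (auto simp: subspace_sum_def)

lemma subspace_subspace_sum:
  assumes "subspace_over UNIV W1" "subspace_over UNIV W2"
  shows "subspace_over UNIV (subspace_sum W1 W2)"
  unfolding subspace_over_def vzero_eq_zero vadd_eq_plus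
proof (intro conjI ballI)
  have "0 + 0 \<in> subspace_sum W1 W2"
    using assms subspace_zero unfolding subspace_sum_def by blast
  then show "0 \<in> subspace_sum W1 W2" by simp
  fix u v assume "u \<in> subspace_sum W1 W2" "v \<in> subspace_sum W1 W2"
  then obtain a b a' b' where ab: "a \<in> W1" "b \<in> W2" "a' \<in> W1" "b' \<in> W2"
    and "u = a + b" "v = a' + b'"
    by (auto simp: subspace_sum_def)
  then have "u + v = (a + a') + (b + b')" by (simp add: algebra_simps)
  then show "u + v \<in> subspace_sum W1 W2"
    using assms ab subspace_add unfolding subspace_sum_def by blast
next
  fix c :: 'a and u assume "u \<in> subspace_sum W1 W2"
  then obtain a b where ab: "a \<in> W1" "b \<in> W2" "u = a + b" by (auto simp: subspace_sum_def)
  then have "vsm c u = vsm c a + vsm c b" by (simp add: vsm_add_right)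
  then show "vsm c u \<in> subspace_sum W1 W2"
    using assms ab subspace_UNIV_vsm unfolding subspace_sum_def by blast
qed

lemma direct_sum_unique:
  assumes "subspace_over UNIV W1" "subspace_over UNIV W2" "W1 \<inter> W2 = {0}"
    and "a \<in> W1" "a' \<in> W1" "b \<in> W2" "b' \<in> W2" "a + b = a' + b'"
  shows "a = a' \<and> b = b'"
proof -
  have "b' - b = a - a'" using assms(8) by (simp add: algebra_simps)
  moreover have "a - a' \<in> W1" "b' - b \<in> W2"
    using assms(1,2,4-7) subspace_UNIV_diff by blast+
  ultimately have "b' - b \<in> W1 \<inter> W2" by simp
  then have "b = b'" using assms(3) by simp
  with assms(8) show ?thesis by simp
qed

lemma card_subspace_sum_less:
  assumes "subspace_over UNIV W1" "subspace_over UNIV W2" "W1 \<inter> W2 \<noteq> {0}"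
    and "finite W1" "finite W2"
  shows "card (subspace_sum W1 W2) < card W1 * card W2"
proof -
  let ?h = "\<lambda>(a, b). a + b"
  obtain d where d: "d \<in> W1" "d \<in> W2" "d \<noteq> 0"
    using assms(3) subspace_zero[OF assms(1)] subspace_zero[OF assms(2)] by blast
  have "\<not> inj_on ?h (W1 \<times> W2)"
  proof
    assume inj: "inj_on ?h (W1 \<times> W2)"
    have mem: "(d, 0) \<in> W1 \<times> W2" "(0, d) \<in> W1 \<times> W2"
      using d subspace_zero[OF assms(1)] subspace_zero[OF assms(2)] by auto
    have "?h (d, 0) = ?h (0, d)" by simp
    then have "(d, 0) = (0, d)" using inj_onD[OF inj _ mem] by blast
    then show False using d(3) by simp
  qed
  then have "card (subspace_sum W1 W2) \<noteq> card (W1 \<times> W2)"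
    unfolding subspace_sum_eq_image by (simp add: inj_on_iff_eq_card assms(4,5))
  moreover have "card (subspace_sum W1 W2) \<le> card (W1 \<times> W2)"
    unfolding subspace_sum_eq_image by (rule card_image_le) (use assms(4,5) in simp)
  ultimately show ?thesis by (simp add: card_cartesian_product)
qed

lemma subspace_sum_eq_ambient:
  fixes W1 :: "(nat \<Rightarrow> 'a::{field,finite}) set"
  assumes "subspace_over UNIV W1" "subspace_over UNIV W2" "W1 \<inter> W2 = {0}"
    and "W1 \<subseteq> ambient N" "W2 \<subseteq> ambient N" and "card W1 * card W2 = CARD('a) ^ N"
  shows "subspace_sum W1 W2 = ambient N"
proof -
  have "inj_on (\<lambda>(a, b). a + b) (W1 \<times> W2)"
    by (rule inj_onI) (auto dest: direct_sum_unique[OF assms(1-3)])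
  then have "card (subspace_sum W1 W2) = card (ambient N :: (nat \<Rightarrow> 'a) set)"
    using assms(6) by (simp add: subspace_sum_eq_image card_image card_cartesian_product card_ambient)
  moreover have "subspace_sum W1 W2 \<subseteq> ambient N"
    using assms(4,5) by (fastforce simp: subspace_sum_def ambient_def)
  ultimately show ?thesis using card_subset_eq[OF finite_ambient] by blast
qed

lemma card_proper_subspace:
  fixes W :: "(nat \<Rightarrow> 'a::{field,finite}) set"
  assumes "subspace_over UNIV W" "subspace_over UNIV W'" "W \<subseteq> W'" "W \<noteq> W'" "finite W'"
  shows "CARD('a) * card W \<le> card W'"
proof -
  obtain y where y: "y \<in> W'" "y \<notin> W" using assms(3,4) by auto
  define k where "k = (\<lambda>(c, e). vsm c y + e)"
  have "inj_on k (UNIV \<times> W)"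
  proof (rule inj_onI, clarify)
    fix c e c' e' assume e: "e \<in> W" "e' \<in> W" and "k (c, e) = k (c', e')"
    then have eq: "vsm c y + e = vsm c' y + e'" by (simp add: k_def)
    then have ce: "vsm (c - c') y = e' - e" by (simp add: vsm_diff_left algebra_simps)
    have "c = c'"
    proof (rule ccontr)
      assume "c \<noteq> c'"
      then have "y = vsm (inverse (c - c')) (e' - e)" by (simp add: ce[symmetric])
      moreover have "e' - e \<in> W" using e assms(1) subspace_UNIV_diff by blast
      ultimately show False using y(2) subspace_UNIV_vsm[OF assms(1)] by simp
    qed
    then show "c = c' \<and> e = e'" using eq by simp
  qed
  moreover have "k ` (UNIV \<times> W) \<subseteq> W'"
  proof clarify
    fix c e assume "e \<in> W"
    then have "e \<in> W'" using assms(3) by blast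
    then show "k (c, e) \<in> W'"
      unfolding k_def using subspace_add[OF assms(2) subspace_UNIV_vsm[OF assms(2) y(1)]] by simp
  qed
  ultimately have "card ((UNIV :: 'a set) \<times> W) \<le> card W'" using assms(5) by (rule card_inj_on_le)
  then show ?thesis by (simp add: card_cartesian_product)
qed

lemma card_inter_le_card_diff:
  assumes "subspace_over K U" "subspace_over UNIV M" "finite U" "\<not> U \<subseteq> M"
  shows "card (U \<inter> M) \<le> card (U - M)"
proof -
  obtain u0 where u0: "u0 \<in> U" "u0 \<notin> M" using assms(4) by blast
  have "(+) u0 ` (U \<inter> M) \<subseteq> U - M"
  proof
    fix z assume "z \<in> (+) u0 ` (U \<inter> M)"
    then obtain m where m: "m \<in> U" "m \<in> M" "z = u0 + m" by blast
    have "z \<in> U" using subspace_add[OF assms(1) u0(1) m(1)] m(3) by simp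
    moreover have "z \<notin> M"
    proof
      assume "z \<in> M"
      then have "z - m \<in> M" using subspace_UNIV_diff[OF assms(2)] m(2) by blast
      then show False using u0(2) m(3) by simp
    qed
    ultimately show "z \<in> U - M" by simp
  qed
  moreover have "inj_on ((+) u0) (U \<inter> M)" by (simp add: inj_on_def)
  ultimately show ?thesis using assms(3) by (intro card_inj_on_le) auto
qed

section \<open>Scattered subspaces and transversal spaces\<close>

lemma scattered_vsm_mem_imp_scalar_mem:
  assumes "is_subfield K" "scattered K U" "u \<in> U" "u \<noteq> 0" "vsm c u \<in> U"
  shows "c \<in> K"
proof -
  obtain B where B: "finite B" "card B = 1" "span_over K B = point u \<inter> U"
    using assms(2-4) unfolding scattered_def has_dim_def by auto
  then obtain b where b: "B = {b}" by (metis card_1_singletonE)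
  have lc: "lin_comb d {b} = vsm (d b) b" for d by (simp add: lin_comb_def vsm_def)
  have "u \<in> span_over K B" using B(3) assms point_self by blast
  then obtain d where d: "u = vsm (d b) b" "d b \<in> K" by (auto simp: span_over_def b lc)
  have "vsm c u \<in> span_over K B" using B(3) assms by (auto simp: mem_point_iff)
  then obtain e where e: "vsm c u = vsm (e b) b" "e b \<in> K" by (auto simp: span_over_def b lc)
  have "d b \<noteq> 0" "b \<noteq> 0" using d assms(4) by auto
  have "vsm (c * d b) b = vsm (e b) b" using d e by (simp add: vsm_vsm)
  then have "c = e b / d b" using \<open>b \<noteq> 0\<close> \<open>d b \<noteq> 0\<close> by (simp add: vsm_right_cancel field_simps)
  then show ?thesis using subfield_divide[OF assms(1) e(2) d(2)] by simp
qed

text \<open>For \<open>\<omega> \<notin> K\<close> scatteredness gives \<open>U \<inter> \<omega> U = 0\<close>, so \<open>U + \<omega> U\<close> has \<open>|U|\<^sup>2\<close> vectors.\<close>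
lemma card_scattered_square_le:
  assumes K: "is_subfield K" "K \<noteq> UNIV"
    and U: "subspace_over K U" "scattered K U"
    and M: "subspace_over UNIV M" "U \<subseteq> M" "finite M"
  shows "card U * card U \<le> card M"
proof -
  obtain \<omega> where \<omega>: "\<omega> \<notin> K" using K(2) by blast
  define g where "g = (\<lambda>(a, b). a + vsm \<omega> b)"
  have "inj_on g (U \<times> U)"
  proof (rule inj_onI, clarsimp simp: g_def)
    fix a b a' b' assume ab: "a \<in> U" "b \<in> U" "a' \<in> U" "b' \<in> U"
      and eq: "a + vsm \<omega> b = a' + vsm \<omega> b'"
    have e: "vsm \<omega> (b - b') = a' - a" using eq by (simp add: vsm_diff_right algebra_simps)
    have "b = b'"
    proof (rule ccontr)
      assume "b \<noteq> b'"
      moreover have "b - b' \<in> U" "vsm \<omega> (b - b') \<in> U"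
        using ab e subspace_diff[OF U(1) K(1)] by auto
      ultimately show False using scattered_vsm_mem_imp_scalar_mem[OF K(1) U(2)] \<omega> by simp
    qed
    then show "a = a' \<and> b = b'" using eq by simp
  qed
  moreover have "g ` (U \<times> U) \<subseteq> M"
    using M by (auto simp: g_def intro!: subspace_add subspace_UNIV_vsm)
  ultimately have "card (U \<times> U) \<le> card M" using M(3) by (rule card_inj_on_le)
  then show ?thesis by (simp add: card_cartesian_product)
qed

definition transversal_space ::
    "nat \<Rightarrow> (nat \<Rightarrow> 'a::field) set \<Rightarrow> (nat \<Rightarrow> 'a) set set \<Rightarrow> (nat \<Rightarrow> 'a) set \<Rightarrow> bool" where
  "transversal_space n U S T \<longleftrightarrow>
     T \<subseteq> ambient (2*n) \<and> subspace_over UNIV T \<and> has_dim UNIV T n \<and>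
     (\<forall>P\<in>linear_set U. \<not> P \<subseteq> T) \<and> (\<forall>s\<in>S. T \<inter> s \<noteq> {vzero})"

lemma transversal_space_inter_eq:
  assumes "subspace_over K U" "transversal_space n U S T"
  shows "U \<inter> T = {0}"
proof -
  have "u = 0" if "u \<in> U" "u \<in> T" for u
  proof (rule ccontr)
    assume "u \<noteq> 0"
    then have "point u \<in> linear_set U" using that by (auto simp: linear_set_def)
    moreover have "point u \<subseteq> T"
      using assms(2) that point_subset by (auto simp: transversal_space_def)
    ultimately show False using assms(2) by (auto simp: transversal_space_def)
  qed
  moreover have "0 \<in> U" "0 \<in> T"
    using assms subspace_zero by (auto simp: transversal_space_def)
  ultimately show ?thesis by blast
qed

lemma card_transversal_space:
  fixes T :: "(nat \<Rightarrow> 'a::{field,finite}) set"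
  shows "transversal_space n U S T \<Longrightarrow> card T = CARD('a) ^ n"
  using card_has_dim[OF is_subfield_UNIV] by (auto simp: transversal_space_def)

lemma finite_transversal_space:
  "transversal_space n U S (T :: (nat \<Rightarrow> 'a::{field,finite}) set) \<Longrightarrow> finite T"
  using finite_ambient finite_subset by (auto simp: transversal_space_def)


section \<open>Subspaces that are graphs\<close>

locale graph_of_bijection =
  fixes K :: "'a::{field,finite} set" and W1 W2 U :: "(nat \<Rightarrow> 'a) set"
  assumes subfield_K: "is_subfield K"
    and subspace_W1: "subspace_over UNIV W1" and subspace_W2: "subspace_over UNIV W2"
    and subspace_U: "subspace_over K U"
    and W1_inter_W2: "W1 \<inter> W2 = {0}"
    and U_subset_sum: "U \<subseteq> subspace_sum W1 W2"
    and U_inter_W1: "U \<inter> W1 = {0}" and U_inter_W2: "U \<inter> W2 = {0}"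
    and finite_W1: "finite W1"
    and card_U_eq_card_W1: "card U = card W1" and card_W2_eq_card_W1: "card W2 = card W1"
begin

lemma finite_W2: "finite W2"
  using finite_W1 subspace_zero[OF subspace_W1] card_W2_eq_card_W1
  by (metis card_gt_0_iff card_ge_0_finite empty_iff)

definition first_component :: "(nat \<Rightarrow> 'a) \<Rightarrow> (nat \<Rightarrow> 'a)" where
  "first_component u = (SOME a. a \<in> W1 \<and> u - a \<in> W2)"

lemma first_component:
  assumes "u \<in> U"
  shows "first_component u \<in> W1 \<and> u - first_component u \<in> W2"
proof -
  obtain a b where "a \<in> W1" "b \<in> W2" "u = a + b"
    using assms U_subset_sum by (auto simp: subspace_sum_def)
  then have "\<exists>a. a \<in> W1 \<and> u - a \<in> W2" by (intro exI[of _ a]) simp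
  then show ?thesis unfolding first_component_def by (rule someI_ex)
qed

lemma inj_on_first_component: "inj_on first_component U"
proof (rule inj_onI)
  fix u u' assume u: "u \<in> U" "u' \<in> U" and eq: "first_component u = first_component u'"
  have "(u - first_component u) - (u' - first_component u') \<in> W2"
    using first_component[OF u(1)] first_component[OF u(2)] subspace_UNIV_diff[OF subspace_W2]
    by blast
  then have "u - u' \<in> W2" using eq by simp
  moreover have "u - u' \<in> U" using u subspace_diff[OF subspace_U subfield_K] by blast
  ultimately have "u - u' = 0" using U_inter_W2 by blast
  then show "u = u'" by simp
qed

lemma first_component_image: "first_component ` U = W1"
proof -
  have "first_component ` U \<subseteq> W1" using first_component by blast
  moreover have "card (first_component ` U) = card W1"
    using inj_on_first_component card_U_eq_card_W1 by (simp add: card_image)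
  ultimately show ?thesis using card_subset_eq[OF finite_W1] by blast
qed

definition graph_map :: "(nat \<Rightarrow> 'a) \<Rightarrow> (nat \<Rightarrow> 'a)" where
  "graph_map a = inv_into U first_component a - a"

lemma
  assumes "a \<in> W1"
  shows graph_map_mem: "graph_map a \<in> W2" and graph_mem: "a + graph_map a \<in> U"
proof -
  have a: "a \<in> first_component ` U" using first_component_image assms by simp
  define u where "u = inv_into U first_component a"
  have u: "u \<in> U" "first_component u = a"
    using inv_into_into[OF a] f_inv_into_f[OF a] by (auto simp: u_def)
  have "graph_map a = u - first_component u" using u by (simp add: graph_map_def u_def)
  then show "graph_map a \<in> W2" "a + graph_map a \<in> U"
    using first_component[OF u(1)] u by auto
qed

lemma graph_map_unique:
  assumes "a \<in> W1" "b \<in> W2" "a + b \<in> U"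
  shows "b = graph_map a"
proof -
  have "(a + b) - (a + graph_map a) \<in> U"
    using assms graph_mem subspace_diff[OF subspace_U subfield_K] by blast
  moreover have "b - graph_map a \<in> W2"
    using assms graph_map_mem subspace_UNIV_diff[OF subspace_W2] by blast
  ultimately have "b - graph_map a \<in> U \<inter> W2" by simp
  then show ?thesis using U_inter_W2 by simp
qed

lemma U_eq_graph: "U = (\<lambda>a. a + graph_map a) ` W1"
proof
  show "(\<lambda>a. a + graph_map a) ` W1 \<subseteq> U" using graph_mem by blast
  show "U \<subseteq> (\<lambda>a. a + graph_map a) ` W1"
  proof
    fix u assume u: "u \<in> U"
    have "u - first_component u = graph_map (first_component u)"
      using first_component[OF u] u by (intro graph_map_unique) auto
    then have "u = first_component u + graph_map (first_component u)"
      by (metis add_diff_cancel_left' diff_add_cancel)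
    then show "u \<in> (\<lambda>a. a + graph_map a) ` W1" using first_component[OF u] by blast
  qed
qed

lemma graph_map_add:
  assumes "a \<in> W1" "a' \<in> W1"
  shows "graph_map (a + a') = graph_map a + graph_map a'"
proof -
  have "(a + graph_map a) + (a' + graph_map a') \<in> U"
    using assms graph_mem subspace_add[OF subspace_U] by blast
  then have "(a + a') + (graph_map a + graph_map a') \<in> U" by (simp add: algebra_simps)
  moreover have "a + a' \<in> W1" "graph_map a + graph_map a' \<in> W2"
    using assms graph_map_mem subspace_add[OF subspace_W1] subspace_add[OF subspace_W2] by blast+
  ultimately show ?thesis using graph_map_unique by simp
qed

lemma graph_map_vsm:
  assumes "c \<in> K" "a \<in> W1"
  shows "graph_map (vsm c a) = vsm c (graph_map a)"
proof -
  have "vsm c (a + graph_map a) \<in> U" using assms graph_mem subspace_vsm[OF subspace_U] by blast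
  then have "vsm c a + vsm c (graph_map a) \<in> U" by (simp add: vsm_add_right)
  moreover have "vsm c a \<in> W1" "vsm c (graph_map a) \<in> W2"
    using assms graph_map_mem subspace_UNIV_vsm[OF subspace_W1] subspace_UNIV_vsm[OF subspace_W2]
    by blast+
  ultimately show ?thesis using graph_map_unique by simp
qed

lemma inj_on_graph_map: "inj_on graph_map W1"
proof (rule inj_onI)
  fix a a' assume a: "a \<in> W1" "a' \<in> W1" and eq: "graph_map a = graph_map a'"
  have "(a + graph_map a) - (a' + graph_map a') \<in> U"
    using a graph_mem subspace_diff[OF subspace_U subfield_K] by blast
  then have "a - a' \<in> U" using eq by simp
  moreover have "a - a' \<in> W1" using a subspace_UNIV_diff[OF subspace_W1] by blast
  ultimately have "a - a' = 0" using U_inter_W1 by blast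
  then show "a = a'" by simp
qed

lemma bij_betw_graph_map: "bij_betw graph_map W1 W2"
proof -
  have "graph_map ` W1 \<subseteq> W2" using graph_map_mem by blast
  moreover have "card (graph_map ` W1) = card W2"
    using inj_on_graph_map card_W2_eq_card_W1 by (simp add: card_image)
  ultimately have "graph_map ` W1 = W2" using card_subset_eq[OF finite_W2] by blast
  then show ?thesis using inj_on_graph_map by (simp add: bij_betw_def)
qed

lemma graph_map_zero: "graph_map 0 = 0"
  using graph_map_unique subspace_zero[OF subspace_W1] subspace_zero[OF subspace_W2]
    subspace_zero[OF subspace_U] by force

lemma graph_map_nonzero: "a \<in> W1 \<Longrightarrow> a \<noteq> 0 \<Longrightarrow> graph_map a \<noteq> 0"
  using inj_on_graph_map graph_map_zero subspace_zero[OF subspace_W1] by (metis inj_onD)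

lemma graph_nonzero:
  assumes "a \<in> W1" "a \<noteq> 0"
  shows "a + graph_map a \<noteq> 0"
proof
  assume "a + graph_map a = 0"
  then have "a = - graph_map a" by (simp add: eq_neg_iff_add_eq_0)
  then have "a \<in> W2"
    using subspace_uminus[OF subspace_W2 is_subfield_UNIV graph_map_mem[OF assms(1)]] by simp
  then show False using W1_inter_W2 assms by blast
qed

end

section \<open>Additive maps preserving points are semilinear\<close>

locale point_preserving_map =
  fixes W :: "(nat \<Rightarrow> 'a::{field,finite}) set" and f :: "(nat \<Rightarrow> 'a) \<Rightarrow> (nat \<Rightarrow> 'a)"
  assumes subspace_W: "subspace_over UNIV W"
    and W_not_point: "\<And>x. W \<noteq> point x"
    and additive_f: "\<And>x y. x \<in> W \<Longrightarrow> y \<in> W \<Longrightarrow> f (x + y) = f x + f y"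
    and inj_on_f: "inj_on f W"
    and maps_points: "\<And>x c. x \<in> W \<Longrightarrow> f (vsm c x) \<in> point (f x)"
begin

lemma map_zero: "f 0 = 0"
proof -
  have "0 \<in> W" using subspace_W by (rule subspace_zero)
  then have "f (0 + 0) = f 0 + f 0" using additive_f by blast
  then show ?thesis by simp
qed

lemma map_nonzero: "x \<in> W \<Longrightarrow> x \<noteq> 0 \<Longrightarrow> f x \<noteq> 0"
  using inj_on_f map_zero subspace_zero[OF subspace_W] by (metis inj_onD)

lemma image_point:
  assumes "x \<in> W" "x \<noteq> 0"
  shows "f ` point x = point (f x)"
proof -
  have "f ` point x \<subseteq> point (f x)" using maps_points assms(1) by (auto simp: mem_point_iff)
  moreover have "inj_on f (point x)"
    using inj_on_subset[OF inj_on_f point_subset[OF subspace_W assms(1)]] .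
  then have "card (f ` point x) = card (point (f x))"
    using assms map_nonzero by (simp add: card_image card_point)
  ultimately show ?thesis using card_subset_eq[OF finite_point] by blast
qed

definition scalar_factor :: "(nat \<Rightarrow> 'a) \<Rightarrow> 'a \<Rightarrow> 'a" where
  "scalar_factor x c = (SOME d. f (vsm c x) = vsm d (f x))"

lemma map_vsm_scalar_factor:
  assumes "x \<in> W"
  shows "f (vsm c x) = vsm (scalar_factor x c) (f x)"
proof -
  have "\<exists>d. f (vsm c x) = vsm d (f x)" using maps_points[OF assms] by (auto simp: mem_point_iff)
  then show ?thesis unfolding scalar_factor_def by (rule someI_ex)
qed

text \<open>Expand \<open>f (c (x + y))\<close> once through \<open>x + y\<close> and once through \<open>x\<close> and \<open>y\<close>.\<close>
lemma scalar_factor_eq_if_independent: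
  assumes x: "x \<in> W" "x \<noteq> 0" and y: "y \<in> W" "y \<notin> point x"
  shows "scalar_factor x = scalar_factor y"
proof
  fix c
  have fy: "f y \<notin> point (f x)"
  proof
    assume "f y \<in> point (f x)"
    then obtain z where z: "z \<in> point x" "f y = f z" using image_point[OF x] by blast
    have "z \<in> W" using z(1) point_subset[OF subspace_W x(1)] by blast
    then have "y = z" using inj_on_f y(1) z(2) by (meson inj_onD)
    then show False using y(2) z(1) by simp
  qed
  have W: "x + y \<in> W" "vsm c x \<in> W" "vsm c y \<in> W"
    using x y subspace_add[OF subspace_W] subspace_UNIV_vsm[OF subspace_W] by auto
  let ?d = "scalar_factor (x + y) c"
  have "vsm (scalar_factor x c) (f x) + vsm (scalar_factor y c) (f y) = f (vsm c x) + f (vsm c y)"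
    by (simp add: map_vsm_scalar_factor x(1) y(1))
  also have "\<dots> = f (vsm c (x + y))"
    using additive_f[OF W(2,3)] by (simp add: vsm_add_right)
  also have "\<dots> = vsm ?d (f (x + y))" by (rule map_vsm_scalar_factor[OF W(1)])
  also have "\<dots> = vsm ?d (f x) + vsm ?d (f y)" by (simp add: additive_f[OF x(1) y(1)] vsm_add_right)
  finally have "scalar_factor x c = ?d \<and> scalar_factor y c = ?d"
    by (rule vsm_pair_eq_imp_eq[OF map_nonzero[OF x] fy])
  then show "scalar_factor x c = scalar_factor y c" by simp
qed

lemma scalar_factor_eq:
  assumes "x \<in> W" "x \<noteq> 0" "y \<in> W" "y \<noteq> 0"
  shows "scalar_factor x = scalar_factor y"
proof (cases "y \<in> point x")
  case False
  then show ?thesis using scalar_factor_eq_if_independent assms by blast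
next
  case True
  have "\<not> W \<subseteq> point x"
    using W_not_point[of x] point_subset[OF subspace_W assms(1)] by auto
  then obtain z where z: "z \<in> W" "z \<notin> point x" by auto
  then have "z \<notin> point y" using point_subset_point[OF True] by blast
  then show ?thesis
    using scalar_factor_eq_if_independent[OF assms(1,2) z] scalar_factor_eq_if_independent[OF assms(3,4) z(1)]
    by simp
qed

lemma map_vsm:
  assumes "x0 \<in> W" "x0 \<noteq> 0" "u \<in> W"
  shows "f (vsm c u) = vsm (scalar_factor x0 c) (f u)"
proof (cases "u = 0")
  case True
  then show ?thesis using map_zero by simp
next
  case False
  then show ?thesis using map_vsm_scalar_factor[OF assms(3)] scalar_factor_eq[OF assms(1,2,3) False] by simp
qed

lemma field_automorphism_scalar_factor:
  assumes x0: "x0 \<in> W" "x0 \<noteq> 0"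
  shows "field_automorphism (scalar_factor x0)"
proof -
  let ?\<sigma> = "scalar_factor x0"
  have fx0: "f x0 \<noteq> 0" using map_nonzero[OF x0] .
  have W: "vsm c x0 \<in> W" for c using subspace_UNIV_vsm[OF subspace_W x0(1)] .
  have add: "?\<sigma> (a + b) = ?\<sigma> a + ?\<sigma> b" for a b
  proof -
    have "vsm (?\<sigma> (a + b)) (f x0) = f (vsm (a + b) x0)"
      using map_vsm_scalar_factor[OF x0(1)] by simp
    also have "\<dots> = f (vsm a x0 + vsm b x0)" by (simp add: vsm_add_left)
    also have "\<dots> = vsm (?\<sigma> a + ?\<sigma> b) (f x0)"
      using additive_f[OF W W] map_vsm_scalar_factor[OF x0(1)] by (simp add: vsm_add_left)
    finally show ?thesis using vsm_right_cancel[OF fx0] by blast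
  qed
  have mult: "?\<sigma> (a * b) = ?\<sigma> a * ?\<sigma> b" for a b
  proof -
    have "vsm (?\<sigma> (a * b)) (f x0) = f (vsm (a * b) x0)"
      using map_vsm_scalar_factor[OF x0(1)] by simp
    also have "\<dots> = f (vsm a (vsm b x0))" by (simp add: vsm_vsm)
    also have "\<dots> = vsm (?\<sigma> a * ?\<sigma> b) (f x0)"
      using map_vsm[OF x0 W] map_vsm_scalar_factor[OF x0(1)] by (simp add: vsm_vsm)
    finally show ?thesis using vsm_right_cancel[OF fx0] by blast
  qed
  have "inj ?\<sigma>"
  proof (rule injI)
    fix a b assume "?\<sigma> a = ?\<sigma> b"
    then have "f (vsm a x0) = f (vsm b x0)" using map_vsm_scalar_factor[OF x0(1)] by simp
    then have "vsm a x0 = vsm b x0" using inj_on_f W by (meson inj_onD)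
    then show "a = b" using vsm_right_cancel[OF x0(2)] by blast
  qed
  then have "bij ?\<sigma>" using finite_UNIV_inj_surj[OF finite] by (simp add: bij_def)
  then show ?thesis unfolding field_automorphism_def using add mult by blast
qed

lemma semilinear_on_scalar_factor:
  assumes "x0 \<in> W" "x0 \<noteq> 0"
  shows "semilinear_on W f (scalar_factor x0)"
  unfolding semilinear_on_def
  using field_automorphism_scalar_factor[OF assms] additive_f map_vsm[OF assms] by simp

end

section \<open>Linear sets of pseudoregulus type\<close>

locale pseudoregulus_setting =
  fixes K :: "'a::{field,finite} set" and n t :: nat and U :: "(nat \<Rightarrow> 'a) set"
    and S :: "(nat \<Rightarrow> 'a) set set" and T1 T2 :: "(nat \<Rightarrow> 'a) set"
  assumes subfield: "is_subfield K"
    and card_UNIV_eq: "CARD('a) = card K ^ t"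
    and n_ge_2: "n \<ge> 2" and t_ge_2: "t \<ge> 2"
    and U_ambient: "U \<subseteq> ambient (2*n)" and U_subspace: "subspace_over K U"
    and U_dim: "has_dim K U (t*n)" and U_scattered: "scattered K U"
    and card_S: "card S = (card K ^ (n*t) - 1) div (card K ^ t - 1)"
    and lines: "\<forall>s\<in>S. s \<subseteq> ambient (2*n) \<and> subspace_over UNIV s \<and> has_dim UNIV s 2
                  \<and> has_dim K (s \<inter> U) t"
    and lines_disjoint: "\<forall>s\<in>S. \<forall>s'\<in>S. s \<noteq> s' \<longrightarrow> s \<inter> s' = {vzero}"
    and transversal_T1: "transversal_space n U S T1"
    and transversal_T2: "transversal_space n U S T2"
    and T1_ne_T2: "T1 \<noteq> T2"
begin

lemma card_K_ge_2: "card K \<ge> 2"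
proof -
  have "{0, 1} \<subseteq> K" using subfield by (simp add: is_subfield_def)
  then have "card {0 :: 'a, 1} \<le> card K" by (intro card_mono) auto
  then show ?thesis by simp
qed

lemma K_ne_UNIV: "K \<noteq> UNIV"
proof -
  have "card K ^ 1 < card K ^ t" using t_ge_2 card_K_ge_2 by (intro power_strict_increasing) auto
  then show ?thesis using card_UNIV_eq by auto
qed

lemma CARD_ge_2: "CARD('a) \<ge> 2"
  using card_K_ge_2 self_le_power[of "card K" t] t_ge_2 card_UNIV_eq by simp

lemma finite_U: "finite U"
  using U_ambient finite_ambient by (rule finite_subset)

lemma card_U: "card U = CARD('a) ^ n"
  using card_has_dim[OF subfield U_dim] card_UNIV_eq by (simp add: power_mult)

lemma subspace_line: "s \<in> S \<Longrightarrow> subspace_over UNIV s"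
  using lines by blast

lemma finite_line: "s \<in> S \<Longrightarrow> finite s"
  using lines finite_ambient finite_subset by blast

lemma card_line: "s \<in> S \<Longrightarrow> card s = CARD('a) ^ 2"
  using lines card_has_dim[OF is_subfield_UNIV, of s 2] by simp

lemma card_line_inter_U: "s \<in> S \<Longrightarrow> card (s \<inter> U) = CARD('a)"
  using lines card_has_dim[OF subfield] card_UNIV_eq by simp

lemma line_inter_transversal:
  assumes T: "transversal_space n U S T" and s: "s \<in> S"
  shows "\<exists>x\<in>T. x \<noteq> 0 \<and> s \<inter> T = point x"
proof -
  have subspace_T: "subspace_over UNIV T" and "T \<inter> s \<noteq> {0}"
    using T s by (auto simp: transversal_space_def)
  then obtain x where x: "x \<in> s \<inter> T" "x \<noteq> 0"
    using subspace_zero[OF subspace_T] subspace_zero[OF subspace_line[OF s]] by blast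
  have "\<not> s \<inter> U \<subseteq> {0}"
  proof
    assume "s \<inter> U \<subseteq> {0}"
    then have "card (s \<inter> U) \<le> card {0 :: nat \<Rightarrow> 'a}" by (intro card_mono) auto
    then show False using card_line_inter_U[OF s] CARD_ge_2 by simp
  qed
  then obtain w where w: "w \<in> s" "w \<in> U" "w \<noteq> 0" by blast
  have "w \<notin> T" using transversal_space_inter_eq[OF U_subspace T] w by blast
  then have "s \<inter> T = point x"
    using line_inter_subspace[OF subspace_line[OF s] finite_line[OF s] card_line[OF s] subspace_T x w(1)]
    by blast
  then show ?thesis using x by blast
qed

lemma card_line_inter_transversal:
  assumes "transversal_space n U S T" "s \<in> S"
  shows "card (s \<inter> T) = CARD('a)" and "0 \<in> s \<inter> T"
  using line_inter_transversal[OF assms] card_point zero_in_point by auto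

lemma finite_S: "finite S" and card_S_mult: "card S * (CARD('a) - 1) = CARD('a) ^ n - 1"
proof -
  have "card K ^ (n*t) = CARD('a) ^ n" using card_UNIV_eq by (simp add: power_mult[symmetric] mult.commute)
  then have "card S = (CARD('a) ^ n - 1) div (CARD('a) - 1)" using card_S card_UNIV_eq by simp
  then show mult: "card S * (CARD('a) - 1) = CARD('a) ^ n - 1"
    using diff_one_dvd_power_diff_one[of "CARD('a)" n] CARD_ge_2 by simp
  have "CARD('a) ^ 0 < CARD('a) ^ n" using CARD_ge_2 n_ge_2 by (intro power_strict_increasing) auto
  then have "card S \<noteq> 0" using mult by (metis diff_is_0_eq mult_0 power_0 leD)
  then show "finite S" using card_ge_0_finite by blast
qed

text \<open>The \<open>|S| (q\<^sup>t - 1) = |U| - 1\<close> nonzero vectors of the lines exhaust those of \<open>U\<close>.\<close>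
lemma lines_cover_U:
  assumes "u \<in> U" "u \<noteq> 0"
  shows "\<exists>s\<in>S. u \<in> s"
proof -
  have zero: "0 \<in> U" "\<And>s. s \<in> S \<Longrightarrow> 0 \<in> s"
    using subspace_zero U_subspace subspace_line by blast+
  define A where "A = (\<Union>s\<in>S. s \<inter> U - {0})"
  have "card A = (\<Sum>s\<in>S. card (s \<inter> U - {0}))"
    unfolding A_def using finite_S finite_U lines_disjoint by (intro card_UN_disjoint) auto
  also have "\<dots> = card S * (CARD('a) - 1)"
    using zero card_line_inter_U by (simp add: card_Diff_singleton)
  also have "\<dots> = card (U - {0})"
    using card_S_mult card_U zero(1) by (simp add: card_Diff_singleton)
  finally have "A = U - {0}"
    using finite_U by (intro card_subset_eq) (auto simp: A_def)
  then show ?thesis using assms by (auto simp: A_def)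
qed

lemma subspace_T1: "subspace_over UNIV T1" and subspace_T2: "subspace_over UNIV T2"
  using transversal_T1 transversal_T2 by (simp_all add: transversal_space_def)

lemma finite_T1: "finite T1" and finite_T2: "finite T2"
  using finite_transversal_space transversal_T1 transversal_T2 by blast+

lemma line_inter_T1_subset_T2:
  assumes s: "s \<in> S" and not_sum: "\<not> s \<subseteq> subspace_sum T1 T2"
  shows "s \<inter> T1 \<subseteq> T2"
proof -
  obtain x where x: "x \<in> T1" "x \<noteq> 0" "s \<inter> T1 = point x"
    using line_inter_transversal[OF transversal_T1 s] by blast
  obtain y where y: "y \<in> T2" "y \<noteq> 0" "s \<inter> T2 = point y"
    using line_inter_transversal[OF transversal_T2 s] by blast
  have "x \<in> s \<inter> T1" "y \<in> s \<inter> T2" unfolding x(3) y(3) by (rule point_self)+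
  show ?thesis
  proof (cases "y \<in> point x")
    case True
    then have "point x \<subseteq> T2"
      using point_eq_point[OF True y(2)] point_subset[OF subspace_T2 y(1)] by simp
    then show ?thesis using x(3) by simp
  next
    case False
    have s_eq: "s = {vsm a x + vsm b y | a b. True}"
      using line_eq_span_pair[OF subspace_line[OF s] finite_line[OF s] card_line[OF s] _ x(2) _ False]
        \<open>x \<in> s \<inter> T1\<close> \<open>y \<in> s \<inter> T2\<close> by blast
    have "s \<subseteq> subspace_sum T1 T2"
    proof
      fix z assume "z \<in> s"
      then obtain a b where "z = vsm a x + vsm b y" using s_eq by blast
      moreover have "vsm a x \<in> T1" "vsm b y \<in> T2"
        using subspace_UNIV_vsm[OF subspace_T1 x(1)] subspace_UNIV_vsm[OF subspace_T2 y(1)] by auto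
      ultimately show "z \<in> subspace_sum T1 T2" unfolding subspace_sum_def by blast
    qed
    then show ?thesis using not_sum by simp
  qed
qed

text \<open>A vector of \<open>U\<close> outside \<open>T\<^sub>1 + T\<^sub>2\<close> lies on a line meeting both transversals in one
  point of \<open>T\<^sub>1 \<inter> T\<^sub>2\<close>; distinct such lines give distinct points.\<close>
lemma card_U_diff_sum_less: "card (U - subspace_sum T1 T2) < card (T1 \<inter> T2)"
proof -
  define M where "M = subspace_sum T1 T2"
  define S' where "S' = {s \<in> S. s \<inter> T1 \<subseteq> T2}"
  have finite_S': "finite S'" using finite_S by (simp add: S'_def)
  have "0 \<in> M" using subspace_zero[OF subspace_subspace_sum[OF subspace_T1 subspace_T2]]
    by (simp add: M_def)
  have "U - M \<subseteq> (\<Union>s\<in>S'. s \<inter> U - {0})"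
  proof
    fix u assume u: "u \<in> U - M"
    then have "u \<noteq> 0" using \<open>0 \<in> M\<close> by auto
    then obtain s where s: "s \<in> S" "u \<in> s" using lines_cover_U u by blast
    then have "s \<in> S'" using line_inter_T1_subset_T2 u by (auto simp: S'_def M_def)
    then show "u \<in> (\<Union>s\<in>S'. s \<inter> U - {0})" using s u \<open>u \<noteq> 0\<close> by blast
  qed
  then have "card (U - M) \<le> card (\<Union>s\<in>S'. s \<inter> U - {0})"
    using finite_U by (intro card_mono) auto
  also have "\<dots> \<le> (\<Sum>s\<in>S'. card (s \<inter> U - {0}))" by (rule card_UN_le[OF finite_S'])
  also have "\<dots> = (\<Sum>s\<in>S'. card (s \<inter> T1 - {0}))"
    using card_line_inter_U card_line_inter_transversal[OF transversal_T1]
      subspace_zero[OF U_subspace] by (intro sum.cong) (auto simp: S'_def card_Diff_singleton)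
  also have "\<dots> = card (\<Union>s\<in>S'. s \<inter> T1 - {0})"
    using finite_S' finite_T1 lines_disjoint by (intro card_UN_disjoint[symmetric]) (auto simp: S'_def)
  also have "\<dots> < card (T1 \<inter> T2)"
  proof (rule psubset_card_mono)
    show "finite (T1 \<inter> T2)" using finite_T1 by simp
    have "0 \<in> T1 \<inter> T2" using subspace_zero subspace_T1 subspace_T2 by blast
    then show "(\<Union>s\<in>S'. s \<inter> T1 - {0}) \<subset> T1 \<inter> T2" by (auto simp: S'_def)
  qed
  finally show ?thesis by (simp add: M_def)
qed

lemma T1_not_subset_T2: "\<not> T1 \<subseteq> T2"
proof
  assume "T1 \<subseteq> T2"
  moreover have "card T1 = card T2"
    using card_transversal_space[OF transversal_T1] card_transversal_space[OF transversal_T2] by simp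
  ultimately show False using T1_ne_T2 card_subset_eq[OF finite_T2] by blast
qed

lemma transversals_inter: "T1 \<inter> T2 = {0}"
proof (rule ccontr)
  assume ne: "T1 \<inter> T2 \<noteq> {0}"
  let ?M = "subspace_sum T1 T2"
  let ?Q = "CARD('a)"
  have subspace_M: "subspace_over UNIV ?M" by (rule subspace_subspace_sum[OF subspace_T1 subspace_T2])
  have finite_M: "finite ?M" using finite_T1 finite_T2 by (simp add: subspace_sum_eq_image)
  have "card ?M < card U * card U"
    using card_subspace_sum_less[OF subspace_T1 subspace_T2 ne finite_T1 finite_T2]
      card_transversal_space[OF transversal_T1] card_transversal_space[OF transversal_T2] card_U
    by simp
  then have "\<not> U \<subseteq> ?M"
    using card_scattered_square_le[OF subfield K_ne_UNIV U_subspace U_scattered subspace_M _ finite_M]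
    by (meson leD)
  then have "card (U \<inter> ?M) \<le> card (U - ?M)"
    by (rule card_inter_le_card_diff[OF U_subspace subspace_M finite_U])
  then have "?Q ^ n \<le> 2 * card (U - ?M)" using card_Int_Diff[OF finite_U, of ?M] card_U by simp
  also have "\<dots> < 2 * card (T1 \<inter> T2)" using card_U_diff_sum_less by simp
  finally have small: "?Q ^ n < 2 * card (T1 \<inter> T2)" .
  have "T1 \<inter> T2 \<noteq> T1" using T1_not_subset_T2 by blast
  then have bound: "?Q * card (T1 \<inter> T2) \<le> ?Q ^ n"
    using card_proper_subspace[OF subspace_inter[OF subspace_T1 subspace_T2] subspace_T1 _ _ finite_T1]
      card_transversal_space[OF transversal_T1] by simp
  have "?Q * ?Q ^ n < ?Q * (2 * card (T1 \<inter> T2))" using small CARD_ge_2 by simp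
  also have "\<dots> \<le> 2 * ?Q ^ n" using bound by simp
  finally show False using CARD_ge_2 by simp
qed

lemma sum_transversals: "subspace_sum T1 T2 = ambient (2*n)"
  using transversal_T1 transversal_T2
  by (intro subspace_sum_eq_ambient[OF subspace_T1 subspace_T2 transversals_inter])
     (auto simp: transversal_space_def card_transversal_space power_add[symmetric] mult_2)

sublocale graph_of_bijection K T1 T2 U
proof
  show "U \<subseteq> subspace_sum T1 T2" using U_ambient sum_transversals by simp
  show "U \<inter> T1 = {0}" "U \<inter> T2 = {0}"
    using transversal_space_inter_eq[OF U_subspace] transversal_T1 transversal_T2 by blast+
  show "card U = card T1" "card T2 = card T1"
    using card_U card_transversal_space[OF transversal_T1] card_transversal_space[OF transversal_T2]
    by simp_all
qed (use subfield subspace_T1 subspace_T2 U_subspace transversals_inter finite_T1 in auto)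

lemma graph_components_in_line:
  assumes s: "s \<in> S" and p: "p \<in> T1" "p + graph_map p \<in> s"
  shows "p \<in> s" and "graph_map p \<in> s"
proof -
  obtain x where x: "x \<in> T1" "x \<noteq> 0" "s \<inter> T1 = point x"
    using line_inter_transversal[OF transversal_T1 s] by blast
  obtain y where y: "y \<in> T2" "y \<noteq> 0" "s \<inter> T2 = point y"
    using line_inter_transversal[OF transversal_T2 s] by blast
  have "x \<in> s \<inter> T1" "y \<in> s \<inter> T2" unfolding x(3) y(3) by (rule point_self)+
  have "y \<notin> point x"
  proof
    assume "y \<in> point x"
    then have "y \<in> T1 \<inter> T2" using point_subset[OF subspace_T1 x(1)] y(1) by blast
    then show False using transversals_inter y(2) by simp
  qed
  then have "s = {vsm a x + vsm b y | a b. True}"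
    using line_eq_span_pair[OF subspace_line[OF s] finite_line[OF s] card_line[OF s]
        IntD1[OF \<open>x \<in> s \<inter> T1\<close>] x(2) IntD1[OF \<open>y \<in> s \<inter> T2\<close>]] by blast
  then obtain a b where ab: "p + graph_map p = vsm a x + vsm b y" using p(2) by blast
  have "p = vsm a x \<and> graph_map p = vsm b y"
    by (rule direct_sum_unique[OF subspace_T1 subspace_T2 transversals_inter p(1)
          subspace_UNIV_vsm[OF subspace_T1 x(1)] graph_map_mem[OF p(1)]
          subspace_UNIV_vsm[OF subspace_T2 y(1)] ab])
  then show "p \<in> s" "graph_map p \<in> s"
    using subspace_UNIV_vsm[OF subspace_line[OF s]] \<open>x \<in> s \<inter> T1\<close> \<open>y \<in> s \<inter> T2\<close> by auto
qed

lemma graph_preimage_line: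
  assumes s: "s \<in> S"
  shows "{p \<in> T1. p + graph_map p \<in> s} = s \<inter> T1"
proof (rule card_subset_eq)
  let ?P = "{p \<in> T1. p + graph_map p \<in> s}"
  let ?g = "\<lambda>p. p + graph_map p"
  show "finite (s \<inter> T1)" using finite_T1 by simp
  show "?P \<subseteq> s \<inter> T1"
  proof
    fix p assume "p \<in> ?P"
    then have "p \<in> T1" "p + graph_map p \<in> s" by simp_all
    then show "p \<in> s \<inter> T1" using graph_components_in_line(1)[OF s] by simp
  qed
  have "?g ` ?P = s \<inter> U"
  proof
    show "?g ` ?P \<subseteq> s \<inter> U" using graph_mem by auto
    show "s \<inter> U \<subseteq> ?g ` ?P"
    proof
      fix u assume u: "u \<in> s \<inter> U"
      then have "u \<in> ?g ` T1" using U_eq_graph by simp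
      then obtain p where "p \<in> T1" "u = p + graph_map p" by (rule imageE)
      then show "u \<in> ?g ` ?P" using u by blast
    qed
  qed
  moreover have "inj_on ?g ?P"
  proof (rule inj_onI)
    fix p p' assume "p \<in> ?P" "p' \<in> ?P" and eq: "p + graph_map p = p' + graph_map p'"
    then have p: "p \<in> T1" "p' \<in> T1" by simp_all
    show "p = p'"
      using direct_sum_unique[OF subspace_T1 subspace_T2 transversals_inter p
          graph_map_mem[OF p(1)] graph_map_mem[OF p(2)] eq] by simp
  qed
  then have "card (?g ` ?P) = card ?P" by (rule card_image)
  ultimately show "card ?P = card (s \<inter> T1)"
    using card_line_inter_U[OF s] card_line_inter_transversal[OF transversal_T1 s] by simp
qed

lemma graph_map_maps_points:
  assumes x: "x \<in> T1"
  shows "graph_map (vsm c x) \<in> point (graph_map x)"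
proof (cases "x = 0")
  case True
  then show ?thesis using graph_map_zero zero_in_point by simp
next
  case False
  obtain s where s: "s \<in> S" "x + graph_map x \<in> s"
    using lines_cover_U[OF graph_mem[OF x] graph_nonzero[OF x False]] by blast
  obtain y where y: "s \<inter> T2 = point y"
    using line_inter_transversal[OF transversal_T2 s(1)] by blast
  have "x \<in> s \<inter> T1" using graph_components_in_line(1)[OF s(1) x s(2)] x by simp
  then have "vsm c x \<in> s \<inter> T1"
    by (rule subspace_UNIV_vsm[OF subspace_inter[OF subspace_line[OF s(1)] subspace_T1]])
  then have "vsm c x \<in> {p \<in> T1. p + graph_map p \<in> s}"
    unfolding graph_preimage_line[OF s(1)] .
  then have cx: "vsm c x \<in> T1" "vsm c x + graph_map (vsm c x) \<in> s" by simp_all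
  have "graph_map (vsm c x) \<in> point y"
    using graph_components_in_line(2)[OF s(1) cx] graph_map_mem[OF cx(1)] y by blast
  moreover have "graph_map x \<in> point y"
    using graph_components_in_line(2)[OF s(1) x s(2)] graph_map_mem[OF x] y by blast
  then have "point (graph_map x) = point y"
    by (rule point_eq_point[OF _ graph_map_nonzero[OF x False]])
  ultimately show ?thesis by simp
qed

sublocale point_preserving_map T1 graph_map
proof
  show "T1 \<noteq> point x" for x
  proof -
    have "CARD('a) ^ 1 < CARD('a) ^ n" using CARD_ge_2 n_ge_2 by (intro power_strict_increasing) auto
    then have "card (point x) < card T1"
      using card_point_le[of x] card_transversal_space[OF transversal_T1] by simp
    then show ?thesis by auto
  qed
qed (use subspace_T1 graph_map_add inj_on_graph_map graph_map_maps_points in auto)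

lemma fixed_field_scalar_factor:
  assumes x0: "x0 \<in> T1" "x0 \<noteq> 0"
  shows "{c. scalar_factor x0 c = c} = K"
proof
  have fx0: "graph_map x0 \<noteq> 0" using graph_map_nonzero[OF x0] .
  show "K \<subseteq> {c. scalar_factor x0 c = c}"
  proof
    fix c assume "c \<in> K"
    then have "vsm (scalar_factor x0 c) (graph_map x0) = vsm c (graph_map x0)"
      using map_vsm_scalar_factor[OF x0(1), of c] graph_map_vsm[OF _ x0(1), of c] by simp
    then show "c \<in> {c. scalar_factor x0 c = c}" using vsm_right_cancel[OF fx0] by simp
  qed
  show "{c. scalar_factor x0 c = c} \<subseteq> K"
  proof
    fix c assume "c \<in> {c. scalar_factor x0 c = c}"
    then have "vsm c (x0 + graph_map x0) = vsm c x0 + graph_map (vsm c x0)"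
      using map_vsm_scalar_factor[OF x0(1)] by (simp add: vsm_add_right)
    also have "\<dots> \<in> U" by (rule graph_mem[OF subspace_UNIV_vsm[OF subspace_T1 x0(1)]])
    finally show "c \<in> K"
      by (rule scattered_vsm_mem_imp_scalar_mem[OF subfield U_scattered graph_mem[OF x0(1)] graph_nonzero[OF x0]])
  qed
qed

lemma linear_set_eq_graph: "linear_set U = {point (u + graph_map u) | u. u \<in> T1 \<and> u \<noteq> 0}"
proof
  show "linear_set U \<subseteq> {point (u + graph_map u) | u. u \<in> T1 \<and> u \<noteq> 0}"
  proof
    fix P assume "P \<in> linear_set U"
    then obtain v where v: "P = point v" "v \<in> U" "v \<noteq> 0" by (auto simp: linear_set_def)
    then obtain u where u: "u \<in> T1" "v = u + graph_map u" using U_eq_graph by blast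
    then have "u \<noteq> 0" using v(3) graph_map_zero by auto
    then show "P \<in> {point (u + graph_map u) | u. u \<in> T1 \<and> u \<noteq> 0}" using u v(1) by blast
  qed
  show "{point (u + graph_map u) | u. u \<in> T1 \<and> u \<noteq> 0} \<subseteq> linear_set U"
    using graph_mem graph_nonzero by (auto simp: linear_set_def)
qed

lemma exists_nonzero_T1: "\<exists>x0\<in>T1. x0 \<noteq> 0"
proof -
  have "point 0 = {0}" by (auto simp: mem_point_iff)
  then have "\<not> T1 \<subseteq> {0}" using W_not_point[of 0] subspace_zero[OF subspace_T1] by auto
  then show ?thesis by auto
qed

end


theorem theorem3p12:
  fixes K :: "'a::{field,finite} set" and q t n :: nat and U :: "(nat \<Rightarrow> 'a) set"
  assumes "is_subfield K" and "card K = q" and "card (UNIV :: 'a set) = q ^ t"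
    and "n \<ge> 2" and "t \<ge> 2"
    and "pseudoregulus_type K n t U"
  shows "\<exists>U1 U2 f \<sigma> \<rho>.
           U1 \<subseteq> ambient (2*n) \<and> U2 \<subseteq> ambient (2*n) \<and>
           subspace_over UNIV U1 \<and> subspace_over UNIV U2 \<and>
           has_dim UNIV U1 n \<and> has_dim UNIV U2 n \<and>
           U1 \<inter> U2 = {vzero} \<and> {vadd u1 u2 | u1 u2. u1 \<in> U1 \<and> u2 \<in> U2} = ambient (2*n) \<and>
           semilinear_on U1 f \<sigma> \<and> bij_betw f U1 U2 \<and> {x. \<sigma> x = x} = K \<and>
           \<rho> \<noteq> 0 \<and>
           linear_set U = {point (vadd u (vsm \<rho> (f u))) | u. u \<in> U1 \<and> u \<noteq> vzero}"
proof -
  obtain S where S: "card S = (card K ^ (n*t) - 1) div (card K ^ t - 1)"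
      "\<forall>s\<in>S. s \<subseteq> ambient (2*n) \<and> subspace_over UNIV s \<and> has_dim UNIV s 2 \<and> has_dim K (s \<inter> U) t"
      "\<forall>s\<in>S. \<forall>s'\<in>S. s \<noteq> s' \<longrightarrow> s \<inter> s' = {vzero}"
      "card {T. transversal_space n U S T} = 2"
    using assms(6) unfolding pseudoregulus_type_def transversal_space_def by blast
  then obtain T1 T2 where T: "{T. transversal_space n U S T} = {T1, T2}" "T1 \<noteq> T2"
    unfolding card_2_iff by blast
  have "T1 \<in> {T. transversal_space n U S T}" "T2 \<in> {T. transversal_space n U S T}"
    unfolding T(1) by simp_all
  with T(2) interpret pseudoregulus_setting K n t U S T1 T2
    using assms S by unfold_locales (auto simp: pseudoregulus_type_def)
  obtain x0 where x0: "x0 \<in> T1" "x0 \<noteq> 0" using exists_nonzero_T1 by blast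
  have "semilinear_on T1 graph_map (scalar_factor x0)" "{x. scalar_factor x0 x = x} = K"
    using semilinear_on_scalar_factor[OF x0] fixed_field_scalar_factor[OF x0] by simp_all
  then show ?thesis
    using transversal_T1 transversal_T2 transversals_inter sum_transversals bij_betw_graph_map
      linear_set_eq_graph
    by (intro exI[of _ T1] exI[of _ T2] exI[of _ graph_map] exI[of _ "scalar_factor x0"] exI[of _ 1])
       (simp add: transversal_space_def subspace_sum_def)
qed

end
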